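(* Consider a cellular network with $n$ base stations (cells) $\mathcal{N}=\{1,\dots,n\}$, where base station $i$ serves a nonempty set $\mathcal{J}_i$ of users (the sets $\mathcal{J}_i$ are pairwise disjoint), with channel power gains $g_{kj}>0$ from base station $k$ to user $j$ and noise power $\sigma^2>0$. For a power vector $\mathbf{p}>\mathbf{0}$, a load vector $\mathbf{x}\ge\mathbf{0}$ and a rate vector $\mathbf{r}=(r_{ij})_{i\in\mathcal{N},j\in\mathcal{J}_i}>\mathbf{0}$, define $$\mathrm{SINR}_{ij}(\mathbf{x},\mathbf{p})=\frac{p_i g_{ij}}{\sum_{k\in\mathcal{N}\setminus\{i\}} p_k g_{kj} x_k+\sigma^2},\qquad f_i(\mathbf{x};\mathbf{r},\mathbf{p})=\sum_{j\in\mathcal{J}_i}\frac{r_{ij}}{\log\big(1+\mathrm{SINR}_{ij}(\mathbf{x},\mathbf{p})\big)},$$ and $\mathbf{f}=(f_1,\dots,f_n)^T$. Let $\mathbf{d}_{\min}>\mathbf{0}$ be a given minimum-rate vector and consider Problem P0: $$\min_{\mathbf{p}>\mathbf{0},\ \mathbf{r}>\mathbf{0},\ \mathbf{0}<\mathbf{x}\le\mathbf{1}} \mathbf{x}^T\mathbf{p}\quad\text{s.t.}\quad \mathbf{x}=\mathbf{f}(\mathbf{x};\mathbf{r},\mathbf{p}),\quad \mathbf{r}\ge\mathbf{d}_{\min}.$$ Suppose full load is implementable, i.e., there exists $\mathbf{p}>\mathbf{0}$ with $\mathbf{1}=\mathbf{f}(\mathbf{1};\mathbf{d}_{\min},\mathbf{p})$.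 Then the optimal solution $(\mathbf{p}^\star,\mathbf{r}^\star,\mathbf{x}^\star)$ of Problem P0 is as follows: $\mathbf{r}^\star=\mathbf{d}_{\min}$, and $\mathbf{p}^\star$ is such that $\mathbf{x}^\star=\mathbf{1}$; thus $\mathbf{p}^\star$ is given implicitly by $\mathbf{1}=\mathbf{f}(\mathbf{1};\mathbf{d}_{\min},\mathbf{p}^\star)$.
   Context: All vector inequalities are componentwise; $\mathbf{a}>\mathbf{0}$ means every component is strictly positive; $\mathbf{0}$ and $\mathbf{1}$ are the all-zeros and all-ones vectors; $\log$ is the natural logarithm. The quantity $x_i$ is the load of cell $i$ and $p_i$ the transmit power per resource unit of base station $i$; $\mathbf{x}^T\mathbf{p}=\sum_i x_ip_i$ is the sum transmission energy. The equation $\mathbf{x}=\mathbf{f}(\mathbf{x};\mathbf{r},\mathbf{p})$ is called the non-linear load coupling equation (NLCE). *)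

theory Defs
  imports Complex_Main
begin

(* Cells are the elements of a finite type 'c (so N = UNIV :: 'c set);
   users are elements of type 'u; J i is the user set of cell i.
   Vectors over cells are functions 'c => real; the rate vector is
   r :: 'c => 'u => real, only the entries r i j with j in J i matter. *)

definition SINR :: "('c::finite \<Rightarrow> 'u \<Rightarrow> real) \<Rightarrow> real \<Rightarrow> ('c \<Rightarrow> real) \<Rightarrow> ('c \<Rightarrow> real) \<Rightarrow> 'c \<Rightarrow> 'u \<Rightarrow> real" where
  "SINR g \<sigma>2 x p i j = p i * g i j / ((\<Sum>k\<in>UNIV - {i}. p k * g k j * x k) + \<sigma>2)"

definition load_f :: "('c::finite \<Rightarrow> 'u set) \<Rightarrow> ('c \<Rightarrow> 'u \<Rightarrow> real) \<Rightarrow> real \<Rightarrow>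
    ('c \<Rightarrow> real) \<Rightarrow> ('c \<Rightarrow> 'u \<Rightarrow> real) \<Rightarrow> ('c \<Rightarrow> real) \<Rightarrow> 'c \<Rightarrow> real" where
  "load_f J g \<sigma>2 x r p i = (\<Sum>j\<in>J i. r i j / ln (1 + SINR g \<sigma>2 x p i j))"

definition energy :: "('c::finite \<Rightarrow> real) \<Rightarrow> ('c \<Rightarrow> real) \<Rightarrow> real" where
  "energy x p = (\<Sum>i\<in>UNIV. x i * p i)"

definition P0_feasible :: "('c::finite \<Rightarrow> 'u set) \<Rightarrow> ('c \<Rightarrow> 'u \<Rightarrow> real) \<Rightarrow> real \<Rightarrow>
    ('c \<Rightarrow> 'u \<Rightarrow> real) \<Rightarrow> ('c \<Rightarrow> real) \<Rightarrow> ('c \<Rightarrow> 'u \<Rightarrow> real) \<Rightarrow> ('c \<Rightarrow> real) \<Rightarrow> bool" where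
  "P0_feasible J g \<sigma>2 dmin p r x \<longleftrightarrow>
     (\<forall>i. p i > 0) \<and>
     (\<forall>i. \<forall>j\<in>J i. r i j > 0) \<and>
     (\<forall>i. 0 < x i \<and> x i \<le> 1) \<and>
     (\<forall>i. x i = load_f J g \<sigma>2 x r p i) \<and>
     (\<forall>i. \<forall>j\<in>J i. r i j \<ge> dmin i j)"

definition P0_optimal :: "('c::finite \<Rightarrow> 'u set) \<Rightarrow> ('c \<Rightarrow> 'u \<Rightarrow> real) \<Rightarrow> real \<Rightarrow>
    ('c \<Rightarrow> 'u \<Rightarrow> real) \<Rightarrow> ('c \<Rightarrow> real) \<Rightarrow> ('c \<Rightarrow> 'u \<Rightarrow> real) \<Rightarrow> ('c \<Rightarrow> real) \<Rightarrow> bool" where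
  "P0_optimal J g \<sigma>2 dmin p r x \<longleftrightarrow>
     P0_feasible J g \<sigma>2 dmin p r x \<and>
     (\<forall>p' r' x'. P0_feasible J g \<sigma>2 dmin p' r' x' \<longrightarrow> energy x p \<le> energy x' p')"

end

theory Submission
  imports Defs
begin

text \<open>
  For a feasible point \<open>(p, r, x)\<close> let \<open>q = x \<circ> p\<close> be the effective powers, so that
  \<open>x\<^sup>T p = \<Sum>\<^sub>i q\<^sub>i\<close>. Under full load, \<open>q\<close> yields the SINRs \<open>x\<^sub>i SINR\<^sub>i\<^sub>j(x, p)\<close>; concavity
  of \<open>t \<mapsto> ln (1 + t)\<close> and \<open>r \<ge> dmin\<close> therefore give \<open>f(1; dmin, q) \<le> f(x; r, p) = x \<le> 1\<close>,
  with equality in cell \<open>i\<close> only if \<open>x\<^sub>i = 1\<close> and \<open>r\<^sub>i = dmin\<^sub>i\<close>.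
  Conversely, a full-load solution \<open>p\<^sup>\<star>\<close> of \<open>f(1; dmin, p\<^sup>\<star>) = 1\<close> lies componentwise below
  every \<open>q > 0\<close> with \<open>f(1; dmin, q) \<le> 1\<close>: if \<open>\<alpha> = max\<^sub>i p\<^sup>\<star>\<^sub>i / q\<^sub>i > 1\<close> is attained at \<open>i\<close>, then
  cell \<open>i\<close> sees strictly larger SINRs under \<open>p\<^sup>\<star>\<close> than under \<open>q\<close>, so its load under \<open>p\<^sup>\<star>\<close>
  would be below 1. Hence every feasible point has energy at least \<open>\<Sum>\<^sub>i p\<^sup>\<star>\<^sub>i\<close>, and
  equality forces \<open>q = p\<^sup>\<star>\<close>, which means full load and minimal rates.
\<close>

lemma mult_ln_one_plus_less:
  fixes x c :: real
  assumes "0 < x" "x < 1" "0 < c"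
  shows "x * ln (1 + c) < ln (1 + x * c)"
proof -
  define m where "m = 1 + x * c"
  have "0 < x * c" "x * c < c" using assms by simp_all
  then have m: "m > 0" "1 \<noteq> m" "1 + c \<noteq> m" unfolding m_def by linarith+
  \<comment> \<open>tangent line of \<open>ln\<close> at \<open>m\<close>, evaluated at \<open>1\<close> and at \<open>1 + c\<close>\<close>
  have "ln 1 - ln m < (1 - m) / m" using ln_diff_less[of 1 m] m by simp
  moreover have "ln (1 + c) - ln m < (1 + c - m) / m" using ln_diff_less[of "1 + c" m] m assms by simp
  ultimately have "(1 - x) * (ln 1 - ln m) + x * (ln (1 + c) - ln m)
      < (1 - x) * ((1 - m) / m) + x * ((1 + c - m) / m)"
    using assms by (intro add_strict_mono mult_strict_left_mono) auto
  also have "\<dots> = 0" using m(1) by (simp add: m_def field_simps)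
  finally show ?thesis by (simp add: m_def algebra_simps)
qed

lemma divide_ln_one_plus_mult_le:
  fixes x c d r :: real
  assumes x: "0 < x" "x \<le> 1" and c: "0 < c" and d: "0 < d" "d \<le> r"
  shows "d / ln (1 + x * c) \<le> r / (x * ln (1 + c))"
    and "d / ln (1 + x * c) = r / (x * ln (1 + c)) \<Longrightarrow> x = 1 \<and> d = r"
proof -
  have L: "0 < ln (1 + c)" using c by simp
  have xL: "0 < x * ln (1 + c)" using x L by simp
  have rhs: "d / (x * ln (1 + c)) \<le> r / (x * ln (1 + c))"
    using d xL by (simp add: divide_right_mono)
  have strict: "d / ln (1 + x * c) < d / (x * ln (1 + c))" if "x \<noteq> 1"
  proof -
    have "x * ln (1 + c) < ln (1 + x * c)" using mult_ln_one_plus_less x c that by simp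
    then show ?thesis using d xL by (intro divide_strict_left_mono) auto
  qed
  show "d / ln (1 + x * c) \<le> r / (x * ln (1 + c))"
    using rhs strict by (cases "x = 1") fastforce+
  assume eq: "d / ln (1 + x * c) = r / (x * ln (1 + c))"
  then have "x = 1" using rhs strict by fastforce
  then show "x = 1 \<and> d = r" using eq L by simp
qed

lemma SINR_full_load_effective_power:
  "SINR g \<sigma>2 (\<lambda>_. 1) (\<lambda>k. x k * p k) i j = x i * SINR g \<sigma>2 x p i j"
  by (simp add: SINR_def mult_ac)

locale cellular_network =
  fixes J :: "'c::finite \<Rightarrow> 'u set" and g :: "'c \<Rightarrow> 'u \<Rightarrow> real" and \<sigma>2 :: real
  assumes J_fin: "finite (J i)" and J_ne: "J i \<noteq> {}"
    and g_pos: "g k j > 0" and \<sigma>2_pos: "\<sigma>2 > 0"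
begin

lemma SINR_pos:
  assumes "\<forall>k. p k > 0" "\<forall>k. x k \<ge> 0"
  shows "SINR g \<sigma>2 x p i j > 0"
proof -
  have "(\<Sum>k\<in>UNIV - {i}. p k * g k j * x k) \<ge> 0"
    using assms g_pos by (intro sum_nonneg) (simp add: less_imp_le)
  then show ?thesis using assms g_pos \<sigma>2_pos by (simp add: SINR_def)
qed

lemma SINR_full_load_less:
  assumes q_pos: "\<forall>k. q k > 0" and p_pos: "\<forall>k. p k > 0"
    and \<alpha>: "\<alpha> > 1" and p_le: "\<forall>k. p k \<le> \<alpha> * q k" and p_i: "p i = \<alpha> * q i"
  shows "SINR g \<sigma>2 (\<lambda>_. 1) q i j < SINR g \<sigma>2 (\<lambda>_. 1) p i j"
proof -
  define Iq where "Iq = (\<Sum>k\<in>UNIV - {i}. q k * g k j)"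
  define Ip where "Ip = (\<Sum>k\<in>UNIV - {i}. p k * g k j)"
  have Iq: "Iq \<ge> 0" unfolding Iq_def using q_pos g_pos by (intro sum_nonneg) (simp add: less_imp_le)
  have Ip: "Ip \<ge> 0" unfolding Ip_def using p_pos g_pos by (intro sum_nonneg) (simp add: less_imp_le)
  have "Ip \<le> (\<Sum>k\<in>UNIV - {i}. \<alpha> * (q k * g k j))" unfolding Ip_def
    using p_le g_pos by (intro sum_mono) (simp add: mult_right_mono less_imp_le)
  then have Ip_le: "Ip \<le> \<alpha> * Iq" unfolding Iq_def by (simp add: sum_distrib_left)
  have S: "0 < \<alpha> * q i * g i j" using \<alpha> q_pos g_pos by simp
  have "SINR g \<sigma>2 (\<lambda>_. 1) q i j = \<alpha> * q i * g i j / (\<alpha> * Iq + \<alpha> * \<sigma>2)"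
    using \<alpha> by (simp add: SINR_def Iq_def distrib_left[symmetric] mult.assoc)
  also have "\<dots> < \<alpha> * q i * g i j / (\<alpha> * Iq + \<sigma>2)"
  proof -
    have "0 \<le> \<alpha> * Iq" using \<alpha> Iq by simp
    then have "0 < \<alpha> * Iq + \<sigma>2" using \<sigma>2_pos by linarith
    moreover have "\<sigma>2 < \<alpha> * \<sigma>2" using \<alpha> \<sigma>2_pos by simp
    ultimately show ?thesis using S by (intro divide_strict_left_mono) simp_all
  qed
  also have "\<dots> \<le> \<alpha> * q i * g i j / (Ip + \<sigma>2)"
    using S Ip Ip_le \<sigma>2_pos by (intro divide_left_mono) auto
  also have "\<dots> = SINR g \<sigma>2 (\<lambda>_. 1) p i j"
    by (simp add: SINR_def Ip_def p_i)
  finally show ?thesis .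
qed

lemma load_f_strict_antimono:
  assumes r_pos: "\<forall>j\<in>J i. r i j > 0"
    and SINR_less: "\<forall>j\<in>J i. 0 < SINR g \<sigma>2 x q i j \<and> SINR g \<sigma>2 x q i j < SINR g \<sigma>2 x' p i j"
  shows "load_f J g \<sigma>2 x' r p i < load_f J g \<sigma>2 x r q i"
  unfolding load_f_def
proof (rule sum_strict_mono[OF J_fin J_ne])
  fix j assume j: "j \<in> J i"
  then have "0 < ln (1 + SINR g \<sigma>2 x q i j)"
    and "ln (1 + SINR g \<sigma>2 x q i j) < ln (1 + SINR g \<sigma>2 x' p i j)"
    using SINR_less by auto
  then show "r i j / ln (1 + SINR g \<sigma>2 x' p i j) < r i j / ln (1 + SINR g \<sigma>2 x q i j)"
    using r_pos j by (intro divide_strict_left_mono) auto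
qed

lemma full_load_power_le:
  assumes d_pos: "\<forall>i. \<forall>j\<in>J i. d i j > 0"
    and q_pos: "\<forall>i. q i > 0" and p_pos: "\<forall>i. p i > 0"
    and q_load: "\<forall>i. load_f J g \<sigma>2 (\<lambda>_. 1) d q i \<le> 1"
    and p_load: "\<forall>i. load_f J g \<sigma>2 (\<lambda>_. 1) d p i = 1"
  shows "p k \<le> q k"
proof -
  define \<alpha> where "\<alpha> = Max (range (\<lambda>i. p i / q i))"
  have "\<alpha> \<in> range (\<lambda>i. p i / q i)" unfolding \<alpha>_def by (rule Max_in) auto
  then obtain i where "\<alpha> = p i / q i" by blast
  then have p_i: "p i = \<alpha> * q i" using q_pos[rule_format, of i] by (simp add: field_simps)
  have p_le: "p k \<le> \<alpha> * q k" for k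
    using Max_ge[of "range (\<lambda>i. p i / q i)" "p k / q k"] q_pos
    by (simp add: \<alpha>_def divide_le_eq)
  have "\<alpha> \<le> 1"
  proof (rule ccontr)
    assume "\<not> \<alpha> \<le> 1"
    then have "SINR g \<sigma>2 (\<lambda>_. 1) q i j < SINR g \<sigma>2 (\<lambda>_. 1) p i j" for j
      using SINR_full_load_less[OF q_pos p_pos _ _ p_i] p_le by simp
    moreover have "0 < SINR g \<sigma>2 (\<lambda>_. 1) q i j" for j
      using SINR_pos q_pos by simp
    ultimately have "load_f J g \<sigma>2 (\<lambda>_. 1) d p i < load_f J g \<sigma>2 (\<lambda>_. 1) d q i"
      using d_pos by (intro load_f_strict_antimono) auto
    then show False using q_load p_load by (metis not_le)
  qed
  then have "\<alpha> * q k \<le> q k"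
    using mult_right_mono[of \<alpha> 1 "q k"] q_pos[rule_format, of k] by simp
  then show ?thesis using p_le[of k] by simp
qed

lemma P0_feasible_effective_load:
  assumes dmin_pos: "\<forall>i. \<forall>j\<in>J i. dmin i j > 0"
    and F: "P0_feasible J g \<sigma>2 dmin p r x"
  shows "load_f J g \<sigma>2 (\<lambda>_. 1) dmin (\<lambda>k. x k * p k) i \<le> 1"
    and "load_f J g \<sigma>2 (\<lambda>_. 1) dmin (\<lambda>k. x k * p k) i = 1 \<Longrightarrow>
           x i = 1 \<and> (\<forall>j\<in>J i. r i j = dmin i j)"
proof -
  have p_pos: "\<forall>k. p k > 0" and x: "\<forall>k. 0 < x k \<and> x k \<le> 1"
    and x_load: "x i = load_f J g \<sigma>2 x r p i" and r_ge: "\<forall>j\<in>J i. dmin i j \<le> r i j"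
    using F unfolding P0_feasible_def by auto
  define c where "c j = SINR g \<sigma>2 x p i j" for j
  define t_eff where "t_eff j = dmin i j / ln (1 + x i * c j)" for j
  define t where "t j = r i j / (x i * ln (1 + c j))" for j
  have c_pos: "0 < c j" for j
    unfolding c_def using SINR_pos p_pos x by (simp add: order_less_imp_le)
  have eff: "load_f J g \<sigma>2 (\<lambda>_. 1) dmin (\<lambda>k. x k * p k) i = sum t_eff (J i)"
    unfolding load_f_def t_eff_def c_def SINR_full_load_effective_power ..
  have "sum t (J i) = load_f J g \<sigma>2 x r p i / x i"
    unfolding t_def load_f_def c_def sum_divide_distrib by (simp add: field_simps)
  then have t_sum: "sum t (J i) = 1" using x_load x[rule_format, of i] by simp
  have t_le: "t_eff j \<le> t j" and t_eq: "t_eff j = t j \<Longrightarrow> x i = 1 \<and> dmin i j = r i j"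
    if "j \<in> J i" for j
    using divide_ln_one_plus_mult_le[of "x i" "c j" "dmin i j" "r i j"] x c_pos dmin_pos r_ge that
    unfolding t_eff_def t_def by auto
  show "load_f J g \<sigma>2 (\<lambda>_. 1) dmin (\<lambda>k. x k * p k) i \<le> 1"
    using eff t_sum t_le sum_mono by metis
  assume "load_f J g \<sigma>2 (\<lambda>_. 1) dmin (\<lambda>k. x k * p k) i = 1"
  then have "t_eff j = t j" if "j \<in> J i" for j
    using sum_mono_inv[where f = t_eff and g = t and I = "J i"] t_le that J_fin eff t_sum
    by simp
  then have "\<forall>j\<in>J i. x i = 1 \<and> r i j = dmin i j" using t_eq by force
  then show "x i = 1 \<and> (\<forall>j\<in>J i. r i j = dmin i j)" using J_ne by blast
qed

end

locale full_load_network = cellular_network J g \<sigma>2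
  for J :: "'c::finite \<Rightarrow> 'u set" and g \<sigma>2 +
  fixes dmin :: "'c \<Rightarrow> 'u \<Rightarrow> real" and ps :: "'c \<Rightarrow> real"
  assumes dmin_pos: "\<forall>i. \<forall>j\<in>J i. dmin i j > 0"
    and ps_pos: "\<forall>i. ps i > 0"
    and ps_load: "\<forall>i. load_f J g \<sigma>2 (\<lambda>_. 1) dmin ps i = 1"
begin

lemma ps_feasible: "P0_feasible J g \<sigma>2 dmin ps dmin (\<lambda>_. 1)"
  unfolding P0_feasible_def using ps_pos dmin_pos ps_load by auto

lemma P0_feasible_effective_power_ge:
  assumes "P0_feasible J g \<sigma>2 dmin p r x"
  shows "ps k \<le> x k * p k"
  using assms P0_feasible_effective_load(1)[OF dmin_pos assms] ps_pos ps_load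
  by (intro full_load_power_le[OF dmin_pos]) (auto simp: P0_feasible_def)

lemma P0_feasible_energy_ge:
  assumes "P0_feasible J g \<sigma>2 dmin p r x"
  shows "energy (\<lambda>_. 1) ps \<le> energy x p"
  unfolding energy_def using P0_feasible_effective_power_ge[OF assms] by (simp add: sum_mono)

lemma ps_optimal: "P0_optimal J g \<sigma>2 dmin ps dmin (\<lambda>_. 1)"
  unfolding P0_optimal_def using ps_feasible P0_feasible_energy_ge by blast

lemma P0_optimal_eq_full_load:
  assumes opt: "P0_optimal J g \<sigma>2 dmin p r x"
  shows "(\<forall>i. \<forall>j\<in>J i. r i j = dmin i j) \<and> (\<forall>i. x i = 1) \<and> p = ps"
proof -
  have F: "P0_feasible J g \<sigma>2 dmin p r x" and E: "energy x p \<le> energy (\<lambda>_. 1) ps"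
    using opt ps_feasible unfolding P0_optimal_def by auto
  have "energy (\<lambda>_. 1) ps = energy x p" using antisym[OF P0_feasible_energy_ge[OF F] E] .
  then have "(\<Sum>k\<in>UNIV. ps k) = (\<Sum>k\<in>UNIV. x k * p k)" by (simp only: energy_def mult_1_left)
  then have "ps k = x k * p k" for k
    by (rule sum_mono_inv[where g = "\<lambda>k. x k * p k"])
      (simp_all add: P0_feasible_effective_power_ge[OF F])
  then have effective_eq: "ps = (\<lambda>k. x k * p k)" by blast
  then have x_r: "x i = 1 \<and> (\<forall>j\<in>J i. r i j = dmin i j)" for i
    using P0_feasible_effective_load(2)[OF dmin_pos F] ps_load by auto
  with effective_eq have "p = ps" by auto
  with x_r show ?thesis by simp
qed

end

theorem theorem1:
  fixes J :: "'c::finite \<Rightarrow> 'u set"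
    and g :: "'c \<Rightarrow> 'u \<Rightarrow> real"
    and \<sigma>2 :: real
    and dmin :: "'c \<Rightarrow> 'u \<Rightarrow> real"
  assumes J_fin: "\<And>i. finite (J i)"
    and J_ne: "\<And>i. J i \<noteq> {}"
    and J_disj: "\<And>i i'. i \<noteq> i' \<Longrightarrow> J i \<inter> J i' = {}"
    and g_pos: "\<And>k j. g k j > 0"
    and \<sigma>2_pos: "\<sigma>2 > 0"
    and dmin_pos: "\<And>i j. j \<in> J i \<Longrightarrow> dmin i j > 0"
    and full_load: "\<exists>p. (\<forall>i. p i > 0) \<and> (\<forall>i. 1 = load_f J g \<sigma>2 (\<lambda>_. 1) dmin p i)"
  shows "(\<exists>p r x. P0_optimal J g \<sigma>2 dmin p r x) \<and>
         (\<forall>p r x. P0_optimal J g \<sigma>2 dmin p r x \<longrightarrow>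
            (\<forall>i. \<forall>j\<in>J i. r i j = dmin i j) \<and>
            (\<forall>i. x i = 1) \<and>
            (\<forall>i. 1 = load_f J g \<sigma>2 (\<lambda>_. 1) dmin p i))"
proof -
  obtain ps where "\<forall>i. ps i > 0" and "\<forall>i. 1 = load_f J g \<sigma>2 (\<lambda>_. 1) dmin ps i"
    using full_load by blast
  then interpret full_load_network J g \<sigma>2 dmin ps
    using J_fin J_ne g_pos \<sigma>2_pos dmin_pos by unfold_locales auto
  have "1 = load_f J g \<sigma>2 (\<lambda>_. 1) dmin p i" if "P0_optimal J g \<sigma>2 dmin p r x" for p r x i
    using P0_optimal_eq_full_load[OF that] ps_load by simp
  then show ?thesis using ps_optimal P0_optimal_eq_full_load by blast
qed

end
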